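(* Let $A$ be a constant real $3\times3$ matrix, $\vec\mu_0\in\mathbb{R}^3$ constant, and $\vec\mu(\vec\gamma)=A\vec\gamma+\vec\mu_0$. Then $\Pi_{\vec\mu}$ defines a Poisson bracket on $\mathbb{R}^3\times(\mathbb{R}^3\setminus\{0\})$ if and only if $A$ is symmetric. In that case $C(\vec M,\vec\gamma)=\tfrac12\vec\gamma\cdot A\vec\gamma+(\vec M+\vec\mu_0)\cdot\vec\gamma$ is a Casimir function of $\Pi_{\vec\mu}$.
   Context: Coordinates on $\mathbb{R}^6$ are $(\vec M,\vec\gamma)=(M_1,M_2,M_3,\gamma_1,\gamma_2,\gamma_3)$. For a smooth $\vec\mu=(\mu_1,\mu_2,\mu_3)$ of $(\vec M,\vec\gamma)$, $\Pi_{\vec\mu}$ is the skew-symmetric $6\times6$ matrix $$\Pi_{\vec\mu}=\begin{bmatrix}0&-M_3-\mu_3&M_2+\mu_2&0&-\gamma_3&\gamma_2\\ M_3+\mu_3&0&-M_1-\mu_1&\gamma_3&0&-\gamma_1\\ -M_2-\mu_2&M_1+\mu_1&0&-\gamma_2&\gamma_1&0\\ 0&-\gamma_3&\gamma_2&0&0&0\\ \gamma_3&0&-\gamma_1&0&0&0\\ -\gamma_2&\gamma_1&0&0&0&0\end{bmatrix},$$ it "defines a Poisson bracket" if $\{f,g\}_{\vec\mu}=(\nabla f)^T\Pi_{\vec\mu}\nabla g$ satisfies the Jacobi identity, and a Casimir function is a smooth $C$ with $\Pi_{\vec\mu}\nabla C=0$. *)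

theory Defs
  imports "HOL-Analysis.Analysis"
begin

text \<open>Points of R^6 are pairs (M, gamma) with M, gamma :: real^3.
  Coordinates are indexed 0..5 in the order (M1,M2,M3,g1,g2,g3).\<close>

type_synonym pt = "(real^3) \<times> (real^3)"

definition unitv :: "nat \<Rightarrow> pt" where
  "unitv i = [(axis 1 1, 0), (axis 2 1, 0), (axis 3 1, 0),
              (0, axis 1 1), (0, axis 2 1), (0, axis 3 1)] ! i"

definition partial :: "nat \<Rightarrow> (pt \<Rightarrow> real) \<Rightarrow> pt \<Rightarrow> real" where
  "partial i f x = deriv (\<lambda>t. f (x + t *\<^sub>R unitv i)) 0"

fun Ck_on :: "nat \<Rightarrow> pt set \<Rightarrow> (pt \<Rightarrow> real) \<Rightarrow> bool" where
  "Ck_on 0 U f = continuous_on U f"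
| "Ck_on (Suc k) U f = (continuous_on U f \<and> (\<forall>x\<in>U. f differentiable (at x))
       \<and> (\<forall>i<6. Ck_on k U (partial i f)))"

definition smooth_on :: "pt set \<Rightarrow> (pt \<Rightarrow> real) \<Rightarrow> bool" where
  "smooth_on U f \<longleftrightarrow> (\<forall>k. Ck_on k U f)"

definition PiMat :: "(pt \<Rightarrow> real^3) \<Rightarrow> pt \<Rightarrow> nat \<Rightarrow> nat \<Rightarrow> real" where
  "PiMat mu p i j = (case p of (M, g) \<Rightarrow> let m = mu (M, g) in
     [[0, -(M$3) - m$3, M$2 + m$2, 0, -(g$3), g$2],
      [M$3 + m$3, 0, -(M$1) - m$1, g$3, 0, -(g$1)],
      [-(M$2) - m$2, M$1 + m$1, 0, -(g$2), g$1, 0],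
      [0, -(g$3), g$2, 0, 0, 0],
      [g$3, 0, -(g$1), 0, 0, 0],
      [-(g$2), g$1, 0, 0, 0, 0]] ! i ! j)"

definition pbracket :: "(pt \<Rightarrow> real^3) \<Rightarrow> (pt \<Rightarrow> real) \<Rightarrow> (pt \<Rightarrow> real) \<Rightarrow> pt \<Rightarrow> real" where
  "pbracket mu f g x = (\<Sum>i<6. \<Sum>j<6. partial i f x * PiMat mu x i j * partial j g x)"

text \<open>Pi_mu defines a Poisson bracket on U: the bracket satisfies the Jacobi identity
  for all smooth functions on U (skew-symmetry and Leibniz are automatic).\<close>
definition defines_poisson_on :: "pt set \<Rightarrow> (pt \<Rightarrow> real^3) \<Rightarrow> bool" where
  "defines_poisson_on U mu \<longleftrightarrow>
     (\<forall>f g h. smooth_on U f \<and> smooth_on U g \<and> smooth_on U h \<longrightarrow>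
        (\<forall>x\<in>U. pbracket mu f (pbracket mu g h) x + pbracket mu g (pbracket mu h f) x
               + pbracket mu h (pbracket mu f g) x = 0))"

definition casimir_on :: "pt set \<Rightarrow> (pt \<Rightarrow> real^3) \<Rightarrow> (pt \<Rightarrow> real) \<Rightarrow> bool" where
  "casimir_on U mu C \<longleftrightarrow> smooth_on U C \<and>
     (\<forall>x\<in>U. \<forall>i<6. (\<Sum>j<6. PiMat mu x i j * partial j C x) = 0)"

definition domU :: "pt set" where
  "domU = {p. snd p \<noteq> 0}"

end

theory Submission
  imports Defs
begin

text \<open>
  For an affine mu the entries of Pi_mu are affine functions, so the derivative of
  a bracket {g, h} has an explicit form (product rule with constant coefficient derivatives).
  Expanding the cyclic sum {f,{g,h}} + {g,{h,f}} + {h,{f,g}} with it, the terms containing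
  second derivatives cancel in pairs, since Pi_mu is skew and Hessians of smooth functions
  are symmetric (Schwarz).  What remains is a trilinear form in the gradients of f, g, h whose
  coefficients, the Jacobi tensor, are explicit polynomials in (M, gamma).  For symmetric A all
  of them vanish, which gives the Jacobi identity; conversely the test functions M1, M2, M3 at
  gamma = e_k single out one component, which is the k-th entry of the antisymmetric part of A.
  The Casimir property is a direct computation with the gradient of the quadratic function C.
\<close>

section \<open>Directional derivatives and the symmetry of second derivatives\<close>

definition dirderiv :: "'a::real_normed_vector \<Rightarrow> ('a \<Rightarrow> real) \<Rightarrow> 'a \<Rightarrow> real" where
  "dirderiv v f x = deriv (\<lambda>t. f (x + t *\<^sub>R v)) 0"

lemma partial_eq_dirderiv: "partial i = dirderiv (unitv i)"
  by (intro ext) (simp add: partial_def dirderiv_def)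

lemma has_derivative_along_line:
  assumes "f differentiable (at (y + s *\<^sub>R v))"
  shows "((\<lambda>t. f (y + t *\<^sub>R v)) has_real_derivative frechet_derivative f (at (y + s *\<^sub>R v)) v) (at s)"
proof -
  let ?F = "frechet_derivative f (at (y + s *\<^sub>R v))"
  have F: "(f has_derivative ?F) (at (y + s *\<^sub>R v))"
    using assms frechet_derivative_works by blast
  have "((\<lambda>t. y + t *\<^sub>R v) has_derivative (\<lambda>t. t *\<^sub>R v)) (at s)"
    by (auto intro!: derivative_eq_intros)
  from has_derivative_compose[OF this F]
  have "((\<lambda>t. f (y + t *\<^sub>R v)) has_derivative (\<lambda>t. ?F (t *\<^sub>R v))) (at s)"
    by (simp add: o_def)
  moreover have "(\<lambda>t. ?F (t *\<^sub>R v)) = (\<lambda>t. ?F v * t)"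
    using linear_scale[OF has_derivative_linear[OF F]] by (auto simp: mult.commute)
  ultimately show ?thesis by (simp add: has_field_derivative_def)
qed

lemma dirderiv_eq_frechet:
  assumes "f differentiable (at x)"
  shows "dirderiv v f x = frechet_derivative f (at x) v"
  unfolding dirderiv_def
  by (rule DERIV_imp_deriv) (use has_derivative_along_line[of f x 0 v] assms in simp)

lemma dirderiv_linear:
  assumes "bounded_linear l"
  shows "dirderiv v l x = l v"
proof -
  have D: "(l has_derivative l) (at x)" using assms by (rule bounded_linear_imp_has_derivative)
  show ?thesis
    using dirderiv_eq_frechet[OF differentiableI[OF D]] frechet_derivative_at[OF D] by simp
qed

lemma has_dirderiv_along_line:
  assumes "f differentiable (at (y + s *\<^sub>R v))"
  shows "((\<lambda>t. f (y + t *\<^sub>R v)) has_real_derivative dirderiv v f (y + s *\<^sub>R v)) (at s)"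
  using has_derivative_along_line[OF assms] dirderiv_eq_frechet[OF assms] by simp

lemma second_difference_mvt:
  assumes r: "r > 0"
    and square: "\<And>s t. 0 \<le> s \<Longrightarrow> s \<le> r \<Longrightarrow> 0 \<le> t \<Longrightarrow> t \<le> r \<Longrightarrow> x + s *\<^sub>R a + t *\<^sub>R b \<in> U"
    and df: "\<forall>y\<in>U. f differentiable (at y)"
    and dfa: "\<forall>y\<in>U. dirderiv a f differentiable (at y)"
  shows "\<exists>\<xi> \<eta>. 0 < \<xi> \<and> \<xi> < r \<and> 0 < \<eta> \<and> \<eta> < r \<and>
     f (x + r *\<^sub>R a + r *\<^sub>R b) - f (x + r *\<^sub>R a) - f (x + r *\<^sub>R b) + f x
     = r * r * dirderiv b (dirderiv a f) (x + \<xi> *\<^sub>R a + \<eta> *\<^sub>R b)"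
proof -
  let ?fa = "dirderiv a f"
  define g where "g s = f ((x + r *\<^sub>R b) + s *\<^sub>R a) - f (x + s *\<^sub>R a)" for s
  have "DERIV g s :> ?fa (x + r *\<^sub>R b + s *\<^sub>R a) - ?fa (x + s *\<^sub>R a)"
    if "0 \<le> s" "s \<le> r" for s
  proof -
    have "x + r *\<^sub>R b + s *\<^sub>R a \<in> U" "x + s *\<^sub>R a \<in> U"
      using square[of s r] square[of s 0] that r by (simp_all add: add_ac)
    then show ?thesis
      unfolding g_def using df by (intro DERIV_diff has_dirderiv_along_line) auto
  qed
  from MVT2[OF r this] obtain \<xi> where xi: "0 < \<xi>" "\<xi> < r"
    and g: "g r - g 0 = r * (?fa (x + r *\<^sub>R b + \<xi> *\<^sub>R a) - ?fa (x + \<xi> *\<^sub>R a))"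
    by auto
  have "DERIV (\<lambda>t. ?fa ((x + \<xi> *\<^sub>R a) + t *\<^sub>R b)) t :> dirderiv b ?fa (x + \<xi> *\<^sub>R a + t *\<^sub>R b)"
    if "0 \<le> t" "t \<le> r" for t
    using dfa square[of \<xi> t] that xi by (intro has_dirderiv_along_line) auto
  from MVT2[OF r this] obtain \<eta> where eta: "0 < \<eta>" "\<eta> < r"
    and h: "?fa (x + \<xi> *\<^sub>R a + r *\<^sub>R b) - ?fa (x + \<xi> *\<^sub>R a)
             = r * dirderiv b ?fa (x + \<xi> *\<^sub>R a + \<eta> *\<^sub>R b)"
    by auto
  have "f (x + r *\<^sub>R a + r *\<^sub>R b) - f (x + r *\<^sub>R a) - f (x + r *\<^sub>R b) + f x = g r - g 0"
    by (simp add: g_def add_ac)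
  also have "\<dots> = r * r * dirderiv b ?fa (x + \<xi> *\<^sub>R a + \<eta> *\<^sub>R b)"
    using g h by (simp add: add_ac)
  finally show ?thesis using xi eta by blast
qed

lemma small_square:
  fixes x a b :: "'a::real_normed_vector"
  assumes "\<delta> > 0"
  obtains r where "r > 0"
    and "\<And>s t. 0 \<le> s \<Longrightarrow> s \<le> r \<Longrightarrow> 0 \<le> t \<Longrightarrow> t \<le> r \<Longrightarrow> dist (x + s *\<^sub>R a + t *\<^sub>R b) x < \<delta>"
proof
  define K where "K = norm a + norm b + 1"
  have K: "K > 0" by (simp add: K_def add_nonneg_pos)
  show r: "\<delta> / K > 0" using assms K by simp
  fix s t assume st: "0 \<le> s" "s \<le> \<delta> / K" "0 \<le> t" "t \<le> \<delta> / K"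
  have "dist (x + s *\<^sub>R a + t *\<^sub>R b) x \<le> s * norm a + t * norm b"
    using norm_triangle_ineq[of "s *\<^sub>R a" "t *\<^sub>R b"] st by (simp add: dist_norm)
  also have "\<dots> \<le> \<delta> / K * norm a + \<delta> / K * norm b"
    using st by (intro add_mono mult_right_mono) auto
  also have "\<dots> < \<delta> / K * norm a + \<delta> / K * norm b + \<delta> / K" using r by simp
  also have "\<dots> = \<delta> / K * K" by (simp only: K_def distrib_left mult_1_right)
  also have "\<dots> = \<delta>" using K by simp
  finally show "dist (x + s *\<^sub>R a + t *\<^sub>R b) x < \<delta>" .
qed

(* Applying the double mean value theorem in both orders: on every small parallelogram the
   two mixed derivatives take a common value at (possibly different) interior points. *)
lemma mixed_dirderivs_meet:
  assumes r: "r > 0"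
    and square: "\<And>s t. 0 \<le> s \<Longrightarrow> s \<le> r \<Longrightarrow> 0 \<le> t \<Longrightarrow> t \<le> r \<Longrightarrow> x + s *\<^sub>R a + t *\<^sub>R b \<in> U"
    and df: "\<forall>y\<in>U. f differentiable (at y)"
    and dfa: "\<forall>y\<in>U. dirderiv a f differentiable (at y)"
    and dfb: "\<forall>y\<in>U. dirderiv b f differentiable (at y)"
  obtains \<xi> \<eta> \<xi>' \<eta>' where "0 < \<xi>" "\<xi> < r" "0 < \<eta>" "\<eta> < r" "0 < \<xi>'" "\<xi>' < r" "0 < \<eta>'" "\<eta>' < r"
    and "dirderiv b (dirderiv a f) (x + \<xi> *\<^sub>R a + \<eta> *\<^sub>R b)
         = dirderiv a (dirderiv b f) (x + \<xi>' *\<^sub>R a + \<eta>' *\<^sub>R b)"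
proof -
  let ?q = "dirderiv b (dirderiv a f)" and ?q' = "dirderiv a (dirderiv b f)"
  have square': "x + s *\<^sub>R b + t *\<^sub>R a \<in> U" if "0 \<le> s" "s \<le> r" "0 \<le> t" "t \<le> r" for s t
    using square[of t s] that by (simp add: add_ac)
  obtain \<xi> \<eta> where p: "0 < \<xi>" "\<xi> < r" "0 < \<eta>" "\<eta> < r"
    and e1: "f (x + r *\<^sub>R a + r *\<^sub>R b) - f (x + r *\<^sub>R a) - f (x + r *\<^sub>R b) + f x
       = r * r * ?q (x + \<xi> *\<^sub>R a + \<eta> *\<^sub>R b)"
    using second_difference_mvt[OF r square df dfa] by blast
  obtain \<eta>' \<xi>' where p': "0 < \<eta>'" "\<eta>' < r" "0 < \<xi>'" "\<xi>' < r"
    and e2: "f (x + r *\<^sub>R b + r *\<^sub>R a) - f (x + r *\<^sub>R b) - f (x + r *\<^sub>R a) + f x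
       = r * r * ?q' (x + \<eta>' *\<^sub>R b + \<xi>' *\<^sub>R a)"
    using second_difference_mvt[OF r square' df dfb] by blast
  have "x + r *\<^sub>R b + r *\<^sub>R a = x + r *\<^sub>R a + r *\<^sub>R b"
    and "x + \<eta>' *\<^sub>R b + \<xi>' *\<^sub>R a = x + \<xi>' *\<^sub>R a + \<eta>' *\<^sub>R b"
    by (simp_all add: add_ac)
  with e1 e2 have "r * r * ?q (x + \<xi> *\<^sub>R a + \<eta> *\<^sub>R b) = r * r * ?q' (x + \<xi>' *\<^sub>R a + \<eta>' *\<^sub>R b)"
    by (simp only:)
  with r have "?q (x + \<xi> *\<^sub>R a + \<eta> *\<^sub>R b) = ?q' (x + \<xi>' *\<^sub>R a + \<eta>' *\<^sub>R b)"
    by simp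
  with p p' show ?thesis using that by blast
qed

(* By continuity, near x both mixed derivatives are within e/2 of their values at x, and
   the previous lemma produces points where they coincide. *)
lemma dirderiv_commute:
  assumes U: "open U" "x \<in> U"
    and df: "\<forall>y\<in>U. f differentiable (at y)"
    and dfa: "\<forall>y\<in>U. dirderiv a f differentiable (at y)"
    and dfb: "\<forall>y\<in>U. dirderiv b f differentiable (at y)"
    and cab: "continuous_on U (dirderiv b (dirderiv a f))"
    and cba: "continuous_on U (dirderiv a (dirderiv b f))"
  shows "dirderiv b (dirderiv a f) x = dirderiv a (dirderiv b f) x"
proof -
  let ?q = "dirderiv b (dirderiv a f)" and ?q' = "dirderiv a (dirderiv b f)"
  have close: "\<bar>?q x - ?q' x\<bar> < e" if e: "e > 0" for e
  proof -
    obtain \<delta>0 where \<delta>0: "\<delta>0 > 0" "ball x \<delta>0 \<subseteq> U"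
      using U open_contains_ball by blast
    have "isCont ?q x" "isCont ?q' x"
      using cab cba U continuous_on_eq_continuous_at by blast+
    then obtain \<delta>1 \<delta>2 where \<delta>12: "\<delta>1 > 0" "\<delta>2 > 0"
      and q: "\<And>y. dist y x < \<delta>1 \<Longrightarrow> dist (?q y) (?q x) < e / 2"
      and q': "\<And>y. dist y x < \<delta>2 \<Longrightarrow> dist (?q' y) (?q' x) < e / 2"
      unfolding continuous_at_eps_delta using half_gt_zero[OF e] by metis
    have "min \<delta>0 (min \<delta>1 \<delta>2) > 0" using \<delta>0 \<delta>12 by simp
    then obtain r where r: "r > 0" and near: "\<And>s t. 0 \<le> s \<Longrightarrow> s \<le> r \<Longrightarrow> 0 \<le> t \<Longrightarrow> t \<le> r
        \<Longrightarrow> dist (x + s *\<^sub>R a + t *\<^sub>R b) x < min \<delta>0 (min \<delta>1 \<delta>2)"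
      using small_square[of _ x a b] by blast
    have square: "x + s *\<^sub>R a + t *\<^sub>R b \<in> U" if "0 \<le> s" "s \<le> r" "0 \<le> t" "t \<le> r" for s t
      using near[OF that] \<delta>0 by (auto simp: dist_commute)
    obtain \<xi> \<eta> \<xi>' \<eta>' where p: "0 < \<xi>" "\<xi> < r" "0 < \<eta>" "\<eta> < r" "0 < \<xi>'" "\<xi>' < r" "0 < \<eta>'" "\<eta>' < r"
      and same: "?q (x + \<xi> *\<^sub>R a + \<eta> *\<^sub>R b) = ?q' (x + \<xi>' *\<^sub>R a + \<eta>' *\<^sub>R b)"
      using mixed_dirderivs_meet[OF r square df dfa dfb] by blast
    have "dist (?q (x + \<xi> *\<^sub>R a + \<eta> *\<^sub>R b)) (?q x) < e / 2"
      using q near[of \<xi> \<eta>] p by simp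
    moreover have "dist (?q' (x + \<xi>' *\<^sub>R a + \<eta>' *\<^sub>R b)) (?q' x) < e / 2"
      using q' near[of \<xi>' \<eta>'] p by simp
    ultimately show ?thesis
      unfolding same dist_real_def by linarith
  qed
  show ?thesis
    using close[of "\<bar>?q x - ?q' x\<bar>"] by (cases "?q x = ?q' x") auto
qed

section \<open>Smooth functions on the phase space\<close>

(* Inhomogeneous quadratic functions.  They are closed under directional differentiation,
   hence smooth; they furnish all the test functions and the Casimir function below. *)
definition quadratic_fun :: "('a::real_normed_vector \<Rightarrow> real) \<Rightarrow> bool" where
  "quadratic_fun f \<longleftrightarrow>
     (\<exists>c l b. bounded_linear l \<and> bounded_bilinear b \<and> f = (\<lambda>x. c + l x + b x x))"

(* The zero form, needed because derivatives of quadratic functions are affine. *)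
lemma bounded_bilinear_zero: "bounded_bilinear (\<lambda>(x::'a::real_normed_vector) (y::'b::real_normed_vector). 0::real)"
  by standard (auto intro: exI[of _ 0])

lemma quadratic_has_derivative:
  assumes "bounded_linear l" "bounded_bilinear b"
  shows "((\<lambda>x. c + l x + b x x) has_derivative (\<lambda>h. l h + (b x h + b h x))) (at x)"
  using assms
  by (auto intro!: derivative_eq_intros bounded_bilinear.FDERIV[OF assms(2)]
      bounded_linear.has_derivative[OF assms(1)])

lemma dirderiv_quadratic:
  assumes "bounded_linear l" "bounded_bilinear b"
  shows "dirderiv v (\<lambda>x. c + l x + b x x) x = l v + (b x v + b v x)"
proof -
  let ?f = "\<lambda>x. c + l x + b x x"
  note D = quadratic_has_derivative[OF assms, of c x]
  have "dirderiv v ?f x = frechet_derivative ?f (at x) v"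
    using differentiableI[OF D] by (rule dirderiv_eq_frechet)
  also have "\<dots> = l v + (b x v + b v x)"
    by (simp add: frechet_derivative_at[OF D, symmetric])
  finally show ?thesis .
qed

lemma quadratic_fun_dirderiv:
  assumes "quadratic_fun f"
  shows "quadratic_fun (dirderiv v f)"
proof -
  obtain c l b where l: "bounded_linear l" and b: "bounded_bilinear b"
    and f: "f = (\<lambda>x. c + l x + b x x)"
    using assms unfolding quadratic_fun_def by blast
  have "dirderiv v f = (\<lambda>x. l v + (b x v + b v x) + 0)"
    unfolding f by (intro ext) (simp add: dirderiv_quadratic[OF l b])
  moreover have "bounded_linear (\<lambda>x. b x v + b v x)"
    using b by (intro bounded_linear_add bounded_bilinear.bounded_linear_left
        bounded_bilinear.bounded_linear_right)
  ultimately show ?thesis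
    unfolding quadratic_fun_def using bounded_bilinear_zero by blast
qed

lemma quadratic_fun_differentiable:
  assumes "quadratic_fun f"
  shows "f differentiable (at x)"
  using assms differentiableI[OF quadratic_has_derivative] unfolding quadratic_fun_def
  by blast

lemma Ck_on_quadratic_fun: "quadratic_fun f \<Longrightarrow> Ck_on k U f"
proof (induction k arbitrary: f)
  case 0
  then show ?case
    by (simp add: continuous_at_imp_continuous_on differentiable_imp_continuous_within
        quadratic_fun_differentiable)
next
  case (Suc k)
  then show ?case
    by (simp add: continuous_at_imp_continuous_on differentiable_imp_continuous_within
        quadratic_fun_differentiable partial_eq_dirderiv quadratic_fun_dirderiv)
qed

lemma smooth_on_quadratic_fun: "quadratic_fun f \<Longrightarrow> smooth_on U f"
  unfolding smooth_on_def using Ck_on_quadratic_fun by blast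

lemma smooth_on_partial: "smooth_on U f \<Longrightarrow> i < 6 \<Longrightarrow> smooth_on U (partial i f)"
  unfolding smooth_on_def by (metis Ck_on.simps(2))

lemma smooth_on_differentiable: "smooth_on U f \<Longrightarrow> x \<in> U \<Longrightarrow> f differentiable (at x)"
  unfolding smooth_on_def by (metis Ck_on.simps(2))

lemma smooth_on_continuous: "smooth_on U f \<Longrightarrow> continuous_on U f"
  unfolding smooth_on_def by (metis Ck_on.simps(1))

lemma smooth_on_partials_commute:
  assumes "open U" "x \<in> U" and f: "smooth_on U f" and "i < 6" "j < 6"
  shows "partial j (partial i f) x = partial i (partial j f) x"
proof -
  have fi: "smooth_on U (partial i f)" and fj: "smooth_on U (partial j f)"
    using f assms smooth_on_partial by blast+
  show ?thesis
    using dirderiv_commute[OF assms(1,2), of f "unitv i" "unitv j"]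
      smooth_on_differentiable[OF f] smooth_on_differentiable[OF fi]
      smooth_on_differentiable[OF fj]
      smooth_on_continuous[OF smooth_on_partial[OF fi \<open>j < 6\<close>]]
      smooth_on_continuous[OF smooth_on_partial[OF fj \<open>i < 6\<close>]]
    unfolding partial_eq_dirderiv by blast
qed

section \<open>The Jacobiator of a bracket with coefficient matrix, as finite-sum algebra\<close>

(* Four-fold sums are sums over a product set; this lets us reindex them by permutations
   of the four indices; the suffix of each name lists the permuted arguments of X. *)
lemma sum4_as_product:
  "(\<Sum>a\<in>S. \<Sum>b\<in>S. \<Sum>c\<in>S. \<Sum>d\<in>S. X a b c d) = (\<Sum>(a,b,c,d)\<in>S\<times>S\<times>S\<times>S. X a b c d)"
  by (simp add: sum.cartesian_product split_def)

lemma sum4_perm_dcab: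
  "(\<Sum>a\<in>S. \<Sum>b\<in>S. \<Sum>c\<in>S. \<Sum>d\<in>S. X a b c d) = (\<Sum>a\<in>S. \<Sum>b\<in>S. \<Sum>c\<in>S. \<Sum>d\<in>S. X d c a b)"
  unfolding sum4_as_product
  by (rule sum.reindex_bij_witness[of _ "\<lambda>(a,b,c,d). (d,c,a,b)" "\<lambda>(a,b,c,d). (c,d,b,a)"]) auto

lemma sum4_perm_adbc:
  "(\<Sum>a\<in>S. \<Sum>b\<in>S. \<Sum>c\<in>S. \<Sum>d\<in>S. X a b c d) = (\<Sum>a\<in>S. \<Sum>b\<in>S. \<Sum>c\<in>S. \<Sum>d\<in>S. X a d b c)"
  unfolding sum4_as_product
  by (rule sum.reindex_bij_witness[of _ "\<lambda>(a,b,c,d). (a,d,b,c)" "\<lambda>(a,b,c,d). (a,c,d,b)"]) auto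

lemma sum4_perm_bdca:
  "(\<Sum>a\<in>S. \<Sum>b\<in>S. \<Sum>c\<in>S. \<Sum>d\<in>S. X a b c d) = (\<Sum>a\<in>S. \<Sum>b\<in>S. \<Sum>c\<in>S. \<Sum>d\<in>S. X b d c a)"
  unfolding sum4_as_product
  by (rule sum.reindex_bij_witness[of _ "\<lambda>(a,b,c,d). (b,d,c,a)" "\<lambda>(a,b,c,d). (d,a,c,b)"]) auto

lemma sum4_perm_cdab:
  "(\<Sum>a\<in>S. \<Sum>b\<in>S. \<Sum>c\<in>S. \<Sum>d\<in>S. X a b c d) = (\<Sum>a\<in>S. \<Sum>b\<in>S. \<Sum>c\<in>S. \<Sum>d\<in>S. X c d a b)"
  unfolding sum4_as_product
  by (rule sum.reindex_bij_witness[of _ "\<lambda>(a,b,c,d). (c,d,a,b)" "\<lambda>(a,b,c,d). (c,d,a,b)"]) auto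

(* Terms with second derivatives of one function occur in pairs in the cyclic sum; they
   cancel because the coefficient matrix P is skew and the Hessian Q is symmetric. *)
lemma second_order_terms_cancel:
  fixes P Q :: "'i \<Rightarrow> 'i \<Rightarrow> real" and U V :: "'i \<Rightarrow> real"
  assumes skew: "\<forall>a\<in>S. \<forall>b\<in>S. P a b = - P b a" and sym: "\<forall>a\<in>S. \<forall>b\<in>S. Q a b = Q b a"
  shows "(\<Sum>a\<in>S. \<Sum>l\<in>S. \<Sum>i\<in>S. \<Sum>j\<in>S. U a * P a l * (Q i l * P i j * V j))
       + (\<Sum>a\<in>S. \<Sum>l\<in>S. \<Sum>i\<in>S. \<Sum>j\<in>S. V a * P a l * (U i * P i j * Q j l)) = 0"
proof -
  have "(\<Sum>a\<in>S. \<Sum>l\<in>S. \<Sum>i\<in>S. \<Sum>j\<in>S. V a * P a l * (U i * P i j * Q j l))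
      = (\<Sum>a\<in>S. \<Sum>l\<in>S. \<Sum>i\<in>S. \<Sum>j\<in>S. V j * P j i * (U a * P a l * Q l i))"
    by (rule sum4_perm_dcab)
  also have "\<dots> = (\<Sum>a\<in>S. \<Sum>l\<in>S. \<Sum>i\<in>S. \<Sum>j\<in>S. - (U a * P a l * (Q i l * P i j * V j)))"
  proof (intro sum.cong refl)
    fix a l i j assume "a \<in> S" "l \<in> S" "i \<in> S" "j \<in> S"
    then have "P j i = - P i j" "Q l i = Q i l" using skew sym by blast+
    then show "V j * P j i * (U a * P a l * Q l i) = - (U a * P a l * (Q i l * P i j * V j))"
      by (simp add: algebra_simps)
  qed
  also have "\<dots> = - (\<Sum>a\<in>S. \<Sum>l\<in>S. \<Sum>i\<in>S. \<Sum>j\<in>S. U a * P a l * (Q i l * P i j * V j))"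
    by (simp add: sum_negf)
  finally show ?thesis by simp
qed

lemma sum_distrib_three:
  fixes c :: "'i \<Rightarrow> 'i \<Rightarrow> real"
  shows "(\<Sum>a\<in>S. \<Sum>l\<in>S. c a l * (\<Sum>i\<in>S. \<Sum>j\<in>S. x l i j + y l i j + z l i j))
   = (\<Sum>a\<in>S. \<Sum>l\<in>S. \<Sum>i\<in>S. \<Sum>j\<in>S. c a l * x l i j)
   + (\<Sum>a\<in>S. \<Sum>l\<in>S. \<Sum>i\<in>S. \<Sum>j\<in>S. c a l * y l i j)
   + (\<Sum>a\<in>S. \<Sum>l\<in>S. \<Sum>i\<in>S. \<Sum>j\<in>S. c a l * z l i j)"
  by (simp add: sum_distrib_left sum.distrib distrib_left)

(* The l-th derivative of the bracket sum_ij X_i P_ij Y_j, given the first derivatives X, Y,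
   the second derivatives X2, Y2 and the derivatives D l i j of the coefficients P_ij. *)
definition bracket_deriv :: "'i set \<Rightarrow> ('i \<Rightarrow> 'i \<Rightarrow> real) \<Rightarrow> ('i \<Rightarrow> 'i \<Rightarrow> 'i \<Rightarrow> real)
    \<Rightarrow> ('i \<Rightarrow> real) \<Rightarrow> ('i \<Rightarrow> 'i \<Rightarrow> real) \<Rightarrow> ('i \<Rightarrow> real) \<Rightarrow> ('i \<Rightarrow> 'i \<Rightarrow> real) \<Rightarrow> 'i \<Rightarrow> real" where
  "bracket_deriv S P D X X2 Y Y2 l =
     (\<Sum>i\<in>S. \<Sum>j\<in>S. X2 i l * P i j * Y j + X i * D l i j * Y j + X i * P i j * Y2 j l)"

(* The first-order part of the Jacobiator:
   J_aij = sum_l (P_al D_lij + P_il D_lja + P_jl D_lai). *)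
definition jacobi_tensor :: "'i set \<Rightarrow> ('i \<Rightarrow> 'i \<Rightarrow> real) \<Rightarrow> ('i \<Rightarrow> 'i \<Rightarrow> 'i \<Rightarrow> real) \<Rightarrow> 'i \<Rightarrow> 'i \<Rightarrow> 'i \<Rightarrow> real" where
  "jacobi_tensor S P D a i j = (\<Sum>l\<in>S. P a l * D l i j + P i l * D l j a + P j l * D l a i)"

lemma jacobiator_expansion:
  fixes P :: "'i \<Rightarrow> 'i \<Rightarrow> real" and D :: "'i \<Rightarrow> 'i \<Rightarrow> 'i \<Rightarrow> real"
  assumes skew: "\<forall>a\<in>S. \<forall>b\<in>S. P a b = - P b a"
    and sF: "\<forall>a\<in>S. \<forall>b\<in>S. F2 a b = F2 b a"
    and sG: "\<forall>a\<in>S. \<forall>b\<in>S. G2 a b = G2 b a"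
    and sH: "\<forall>a\<in>S. \<forall>b\<in>S. H2 a b = H2 b a"
  shows "(\<Sum>a\<in>S. \<Sum>l\<in>S. F a * P a l * bracket_deriv S P D G G2 H H2 l)
       + (\<Sum>a\<in>S. \<Sum>l\<in>S. G a * P a l * bracket_deriv S P D H H2 F F2 l)
       + (\<Sum>a\<in>S. \<Sum>l\<in>S. H a * P a l * bracket_deriv S P D F F2 G G2 l)
     = (\<Sum>a\<in>S. \<Sum>i\<in>S. \<Sum>j\<in>S. F a * G i * H j * jacobi_tensor S P D a i j)"
proof -
  let ?s = "\<lambda>X. (\<Sum>a\<in>S. \<Sum>l\<in>S. \<Sum>i\<in>S. \<Sum>j\<in>S. X a l i j)"
  have e1: "(\<Sum>a\<in>S. \<Sum>l\<in>S. F a * P a l * bracket_deriv S P D G G2 H H2 l)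
     = ?s (\<lambda>a l i j. F a * P a l * (G2 i l * P i j * H j)) + ?s (\<lambda>a l i j. F a * P a l * (G i * D l i j * H j))
       + ?s (\<lambda>a l i j. F a * P a l * (G i * P i j * H2 j l))"
    unfolding bracket_deriv_def by (rule sum_distrib_three)
  have e2: "(\<Sum>a\<in>S. \<Sum>l\<in>S. G a * P a l * bracket_deriv S P D H H2 F F2 l)
     = ?s (\<lambda>a l i j. G a * P a l * (H2 i l * P i j * F j)) + ?s (\<lambda>a l i j. G a * P a l * (H i * D l i j * F j))
       + ?s (\<lambda>a l i j. G a * P a l * (H i * P i j * F2 j l))"
    unfolding bracket_deriv_def by (rule sum_distrib_three)
  have e3: "(\<Sum>a\<in>S. \<Sum>l\<in>S. H a * P a l * bracket_deriv S P D F F2 G G2 l)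
     = ?s (\<lambda>a l i j. H a * P a l * (F2 i l * P i j * G j)) + ?s (\<lambda>a l i j. H a * P a l * (F i * D l i j * G j))
       + ?s (\<lambda>a l i j. H a * P a l * (F i * P i j * G2 j l))"
    unfolding bracket_deriv_def by (rule sum_distrib_three)
  have c1: "?s (\<lambda>a l i j. F a * P a l * (G2 i l * P i j * H j)) + ?s (\<lambda>a l i j. H a * P a l * (F i * P i j * G2 j l)) = 0"
    by (rule second_order_terms_cancel[OF skew sG])
  have c2: "?s (\<lambda>a l i j. G a * P a l * (H2 i l * P i j * F j)) + ?s (\<lambda>a l i j. F a * P a l * (G i * P i j * H2 j l)) = 0"
    by (rule second_order_terms_cancel[OF skew sH])
  have c3: "?s (\<lambda>a l i j. H a * P a l * (F2 i l * P i j * G j)) + ?s (\<lambda>a l i j. G a * P a l * (H i * P i j * F2 j l)) = 0"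
    by (rule second_order_terms_cancel[OF skew sF])
  have d1: "?s (\<lambda>a l i j. F a * P a l * (G i * D l i j * H j))
     = (\<Sum>a\<in>S. \<Sum>i\<in>S. \<Sum>j\<in>S. \<Sum>l\<in>S. F a * G i * H j * (P a l * D l i j))"
    by (subst sum4_perm_adbc) (simp add: mult_ac)
  have d2: "?s (\<lambda>a l i j. G a * P a l * (H i * D l i j * F j))
     = (\<Sum>a\<in>S. \<Sum>i\<in>S. \<Sum>j\<in>S. \<Sum>l\<in>S. F a * G i * H j * (P i l * D l j a))"
    by (subst sum4_perm_bdca) (simp add: mult_ac)
  have d3: "?s (\<lambda>a l i j. H a * P a l * (F i * D l i j * G j))
     = (\<Sum>a\<in>S. \<Sum>i\<in>S. \<Sum>j\<in>S. \<Sum>l\<in>S. F a * G i * H j * (P j l * D l a i))"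
    by (subst sum4_perm_cdab) (simp add: mult_ac)
  have r: "(\<Sum>a\<in>S. \<Sum>i\<in>S. \<Sum>j\<in>S. F a * G i * H j * jacobi_tensor S P D a i j)
     = (\<Sum>a\<in>S. \<Sum>i\<in>S. \<Sum>j\<in>S. \<Sum>l\<in>S. F a * G i * H j * (P a l * D l i j))
     + (\<Sum>a\<in>S. \<Sum>i\<in>S. \<Sum>j\<in>S. \<Sum>l\<in>S. F a * G i * H j * (P i l * D l j a))
     + (\<Sum>a\<in>S. \<Sum>i\<in>S. \<Sum>j\<in>S. \<Sum>l\<in>S. F a * G i * H j * (P j l * D l a i))"
    by (simp add: jacobi_tensor_def sum_distrib_left sum.distrib distrib_left)
  show ?thesis unfolding e1 e2 e3 r d1[symmetric] d2[symmetric] d3[symmetric]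
    using c1 c2 c3 by linarith
qed

section \<open>The matrix Pi for an affine mu\<close>

lemma less6: "(i::nat) < 6 \<longleftrightarrow> i = 0 \<or> i = 1 \<or> i = 2 \<or> i = 3 \<or> i = 4 \<or> i = 5"
  by auto

lemma lessThan6: "{..<6::nat} = {0, 1, 2, 3, 4, 5}"
  by auto

lemma has_partial_along_line:
  assumes "f differentiable (at x)"
  shows "((\<lambda>t. f (x + t *\<^sub>R unitv l)) has_real_derivative partial l f x) (at 0)"
  using has_dirderiv_along_line[of f x 0 "unitv l"] assms by (simp add: partial_eq_dirderiv)

lemma PiMat_skew:
  assumes "i < 6" "j < 6"
  shows "PiMat mu x i j = - PiMat mu x j i"
proof -
  obtain M g where x: "x = (M, g)" by (cases x)
  show ?thesis
    using assms unfolding less6 by (elim disjE) (simp_all add: PiMat_def x Let_def)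
qed

(* For affine mu the entries of Pi are affine, so their partial derivatives are the constants
   dPi mu l i j. *)
definition dPi :: "(pt \<Rightarrow> real^3) \<Rightarrow> nat \<Rightarrow> nat \<Rightarrow> nat \<Rightarrow> real" where
  "dPi mu l i j = PiMat mu (unitv l) i j - PiMat mu 0 i j"

lemma PiMat_along_line:
  assumes mu: "mu = (\<lambda>(M::real^3, g::real^3). A *v g + mu0)" and "i < 6" "j < 6"
  shows "PiMat mu (x + t *\<^sub>R v) i j = PiMat mu x i j + t * (PiMat mu v i j - PiMat mu 0 i j)"
proof -
  obtain M g where x: "x = (M, g)" by (cases x)
  obtain M' g' where v: "v = (M', g')" by (cases v)
  have Av: "A *v (g + t *\<^sub>R g') = A *v g + t *\<^sub>R (A *v g')"
    by (simp add: matrix_vector_right_distrib matrix_vector_mult_scaleR)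
  have e: "x + t *\<^sub>R v = (M + t *\<^sub>R M', g + t *\<^sub>R g')" by (simp add: x v)
  show ?thesis
    using assms(2,3) unfolding less6 e
    by (elim disjE) (simp_all add: PiMat_def mu x v Av Let_def algebra_simps zero_prod_def)
qed

lemma partial_pbracket:
  assumes mu: "mu = (\<lambda>(M::real^3, g::real^3). A *v g + mu0)"
    and g: "\<forall>i<6. partial i g differentiable (at x)"
    and h: "\<forall>j<6. partial j h differentiable (at x)"
  shows "partial l (pbracket mu g h) x =
    bracket_deriv {..<6} (PiMat mu x) (dPi mu) (\<lambda>i. partial i g x) (\<lambda>i l. partial l (partial i g) x)
      (\<lambda>j. partial j h x) (\<lambda>j l. partial l (partial j h) x) l"
proof -
  have dP: "((\<lambda>t. PiMat mu (x + t *\<^sub>R unitv l) i j) has_real_derivative dPi mu l i j) (at 0)"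
    if "i < 6" "j < 6" for i j
    unfolding PiMat_along_line[OF mu that] dPi_def by (auto intro!: derivative_eq_intros)
  have "((\<lambda>t. pbracket mu g h (x + t *\<^sub>R unitv l)) has_real_derivative
      bracket_deriv {..<6} (PiMat mu x) (dPi mu) (\<lambda>i. partial i g x) (\<lambda>i l. partial l (partial i g) x)
      (\<lambda>j. partial j h x) (\<lambda>j l. partial l (partial j h) x) l) (at 0)"
    unfolding pbracket_def bracket_deriv_def
  proof (intro DERIV_sum)
    fix i j :: nat assume "i \<in> {..<6}" "j \<in> {..<6}"
    then have ij: "i < 6" "j < 6" by auto
    have dg: "((\<lambda>t. partial i g (x + t *\<^sub>R unitv l)) has_real_derivative partial l (partial i g) x) (at 0)"
      using g ij has_partial_along_line by blast
    have dh: "((\<lambda>t. partial j h (x + t *\<^sub>R unitv l)) has_real_derivative partial l (partial j h) x) (at 0)"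
      using h ij has_partial_along_line by blast
    show "((\<lambda>t. partial i g (x + t *\<^sub>R unitv l) * PiMat mu (x + t *\<^sub>R unitv l) i j
              * partial j h (x + t *\<^sub>R unitv l)) has_real_derivative
          partial l (partial i g) x * PiMat mu x i j * partial j h x
          + partial i g x * dPi mu l i j * partial j h x
          + partial i g x * PiMat mu x i j * partial l (partial j h) x) (at 0)"
      by (rule DERIV_cong[OF DERIV_mult[OF DERIV_mult[OF dg dP[OF ij]] dh]]) (simp add: algebra_simps)
  qed
  then show ?thesis unfolding partial_def by (rule DERIV_imp_deriv)
qed

lemma jacobiator_pbracket:
  assumes mu: "mu = (\<lambda>(M::real^3, g::real^3). A *v g + mu0)" and U: "open U" "x \<in> U"
    and f: "smooth_on U f" and g: "smooth_on U g" and h: "smooth_on U h"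
  shows "pbracket mu f (pbracket mu g h) x + pbracket mu g (pbracket mu h f) x
         + pbracket mu h (pbracket mu f g) x
       = (\<Sum>a\<in>{..<6}. \<Sum>i\<in>{..<6}. \<Sum>j\<in>{..<6}.
           partial a f x * partial i g x * partial j h x * jacobi_tensor {..<6} (PiMat mu x) (dPi mu) a i j)"
proof -
  have skew: "\<forall>a\<in>{..<6}. \<forall>b\<in>{..<6}. PiMat mu x a b = - PiMat mu x b a"
    using PiMat_skew by blast
  have hessian_sym: "\<forall>a\<in>{..<6}. \<forall>b\<in>{..<6}. partial b (partial a k) x = partial a (partial b k) x"
    if "smooth_on U k" for k
    using smooth_on_partials_commute[OF U that] by blast
  have second_diff: "\<forall>i<6. partial i k differentiable (at x)" if "smooth_on U k" for k
    using smooth_on_differentiable[OF smooth_on_partial[OF that] U(2)] by blast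
  have outer: "pbracket mu p K x = (\<Sum>a\<in>{..<6}. \<Sum>l\<in>{..<6}. partial a p x * PiMat mu x a l * partial l K x)"
    for p K
    unfolding pbracket_def by simp
  show ?thesis
    unfolding outer partial_pbracket[OF mu second_diff[OF g] second_diff[OF h]]
      partial_pbracket[OF mu second_diff[OF h] second_diff[OF f]]
      partial_pbracket[OF mu second_diff[OF f] second_diff[OF g]]
    by (rule jacobiator_expansion[OF skew hessian_sym[OF f] hessian_sym[OF g] hessian_sym[OF h]])
qed

section \<open>The Jacobi tensor of Pi_mu\<close>

lemma symmetric_matrix3_iff:
  "transpose A = (A::real^3^3) \<longleftrightarrow> A$1$2 = A$2$1 \<and> A$1$3 = A$3$1 \<and> A$2$3 = A$3$2"
proof
  assume T: "transpose A = A"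
  have "A$i$j = A$j$i" for i j
  proof -
    have "transpose A $ j $ i = A $ j $ i" using T by simp
    then show ?thesis by (simp add: transpose_def)
  qed
  then show "A$1$2 = A$2$1 \<and> A$1$3 = A$3$1 \<and> A$2$3 = A$3$2" by simp
next
  assume "A$1$2 = A$2$1 \<and> A$1$3 = A$3$1 \<and> A$2$3 = A$3$2"
  then show "transpose A = A" by (simp add: vec_eq_iff forall_3 transpose_def)
qed

lemma jacobi_tensor_vanishes:
  assumes mu: "mu = (\<lambda>(M::real^3, g::real^3). A *v g + mu0)" and sym: "transpose A = A"
    and "a < 6" "i < 6" "j < 6"
  shows "jacobi_tensor {..<6} (PiMat mu x) (dPi mu) a i j = 0"
proof -
  obtain M g where x: "x = (M, g)" by (cases x)
  have s: "A$1$2 = A$2$1" "A$1$3 = A$3$1" "A$2$3 = A$3$2"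
    using sym symmetric_matrix3_iff by auto
  show ?thesis
    using assms(3-5) unfolding less6
    by (elim disjE) (simp_all add: jacobi_tensor_def dPi_def PiMat_def unitv_def mu x Let_def
        matrix_vector_mult_def sum_3 axis_def zero_prod_def lessThan6 s algebra_simps)
qed

lemma jacobi_tensor_012:
  assumes mu: "mu = (\<lambda>(M::real^3, g::real^3). A *v g + mu0)"
  shows "jacobi_tensor {..<6} (PiMat mu (M, g)) (dPi mu) 0 1 2
    = g$1 * (A$2$3 - A$3$2) + g$2 * (A$3$1 - A$1$3) + g$3 * (A$1$2 - A$2$1)"
  by (simp add: jacobi_tensor_def dPi_def PiMat_def unitv_def mu Let_def matrix_vector_mult_def
      sum_3 axis_def zero_prod_def lessThan6 algebra_simps)

section \<open>Test functions and the Casimir function\<close>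

lemma inner_unitv: "i < 6 \<Longrightarrow> j < 6 \<Longrightarrow> unitv i \<bullet> unitv j = (if i = j then 1 else 0)"
  unfolding less6 by (elim disjE) (simp_all add: unitv_def inner_prod_def inner_axis_axis)

definition coord :: "nat \<Rightarrow> pt \<Rightarrow> real" where
  "coord a x = x \<bullet> unitv a"

lemma bounded_linear_coord: "bounded_linear (coord a)"
  unfolding coord_def by (rule bounded_linear_inner_left)

lemma partial_coord: "i < 6 \<Longrightarrow> a < 6 \<Longrightarrow> partial i (coord a) x = (if i = a then 1 else 0)"
  by (simp add: partial_eq_dirderiv dirderiv_linear[OF bounded_linear_coord] coord_def inner_commute
      inner_unitv)

lemma smooth_on_coord: "smooth_on U (coord a)"
proof (rule smooth_on_quadratic_fun)
  have "coord a = (\<lambda>x. 0 + coord a x + 0)" by simp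
  then show "quadratic_fun (coord a)"
    unfolding quadratic_fun_def using bounded_linear_coord bounded_bilinear_zero by blast
qed

lemma jacobiator_coords:
  assumes mu: "mu = (\<lambda>(M::real^3, g::real^3). A *v g + mu0)" and U: "open U" "x \<in> U"
  shows "pbracket mu (coord 0) (pbracket mu (coord 1) (coord 2)) x
       + pbracket mu (coord 1) (pbracket mu (coord 2) (coord 0)) x
       + pbracket mu (coord 2) (pbracket mu (coord 0) (coord 1)) x
     = jacobi_tensor {..<6} (PiMat mu x) (dPi mu) 0 1 2"
  unfolding jacobiator_pbracket[OF mu U smooth_on_coord smooth_on_coord smooth_on_coord]
  by (simp add: lessThan6 partial_coord)

(* The quadratic part of the Casimir function, written as a bounded bilinear form. *)
definition casimir_form :: "real^3^3 \<Rightarrow> pt \<Rightarrow> pt \<Rightarrow> real" where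
  "casimir_form A x y = (fst x + (1/2) *\<^sub>R (transpose A *v snd x)) \<bullet> snd y"

lemma bounded_bilinear_casimir_form: "bounded_bilinear (casimir_form A)"
proof -
  have "bounded_linear (\<lambda>x::pt. (1/2) *\<^sub>R (transpose A *v snd x))"
    by (intro bounded_linear_compose[OF bounded_linear_scaleR_right]
        bounded_linear_compose[OF matrix_vector_mul_bounded_linear bounded_linear_snd])
  then have "bounded_linear (\<lambda>x::pt. fst x + (1/2) *\<^sub>R (transpose A *v snd x))"
    by (intro bounded_linear_add bounded_linear_fst)
  then show ?thesis
    unfolding casimir_form_def by (intro bounded_bilinear.comp[OF bounded_bilinear_inner] bounded_linear_snd)
qed

lemma casimir_as_quadratic:
  "(\<lambda>(M, g). (1/2) * (g \<bullet> (A *v g)) + (M + mu0) \<bullet> g) = (\<lambda>x. 0 + snd x \<bullet> mu0 + casimir_form A x x)"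
proof (intro ext, clarify)
  fix M g :: "real^3"
  have "(transpose A *v g) \<bullet> g = g \<bullet> (A *v g)"
    by (simp add: dot_lmul_matrix)
  then show "(1/2) * (g \<bullet> (A *v g)) + (M + mu0) \<bullet> g = 0 + snd (M, g) \<bullet> mu0 + casimir_form A (M, g) (M, g)"
    by (simp add: casimir_form_def inner_add_left inner_add_right inner_commute)
qed

lemma partial_casimir:
  "partial j (\<lambda>(M, g). (1/2) * (g \<bullet> (A *v g)) + (M + mu0) \<bullet> g) x
     = snd (unitv j) \<bullet> mu0 + (casimir_form A x (unitv j) + casimir_form A (unitv j) x)"
  unfolding casimir_as_quadratic partial_eq_dirderiv
  by (rule dirderiv_quadratic[OF bounded_linear_compose[OF bounded_linear_inner_left bounded_linear_snd]
        bounded_bilinear_casimir_form])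

lemma casimir_rows:
  assumes mu: "mu = (\<lambda>(M::real^3, g::real^3). A *v g + mu0)" and sym: "transpose A = A" and "i < 6"
  shows "(\<Sum>j<6. PiMat mu x i j * partial j (\<lambda>(M, g). (1/2) * (g \<bullet> (A *v g)) + (M + mu0) \<bullet> g) x) = 0"
proof -
  obtain M g where x: "x = (M, g)" by (cases x)
  have s: "A$1$2 = A$2$1" "A$1$3 = A$3$1" "A$2$3 = A$3$2"
    using sym symmetric_matrix3_iff by auto
  show ?thesis
    using \<open>i < 6\<close> unfolding less6 partial_casimir
    by (elim disjE) (simp_all add: casimir_form_def PiMat_def unitv_def mu x Let_def lessThan6
        matrix_vector_mult_def transpose_def inner_vec_def sum_3 axis_def s algebra_simps)
qed

lemma casimir_if_symmetric:
  assumes mu: "mu = (\<lambda>(M::real^3, g::real^3). A *v g + mu0)" and sym: "transpose A = A"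
  shows "casimir_on U mu (\<lambda>(M, g). (1/2) * (g \<bullet> (A *v g)) + (M + mu0) \<bullet> g)"
proof -
  have "quadratic_fun (\<lambda>(M, g). (1/2) * (g \<bullet> (A *v g)) + (M + mu0) \<bullet> g)"
    unfolding quadratic_fun_def casimir_as_quadratic
    using bounded_linear_compose[OF bounded_linear_inner_left bounded_linear_snd]
      bounded_bilinear_casimir_form by blast
  then show ?thesis
    unfolding casimir_on_def using smooth_on_quadratic_fun casimir_rows[OF mu sym] by blast
qed

lemma poisson_if_symmetric:
  assumes mu: "mu = (\<lambda>(M::real^3, g::real^3). A *v g + mu0)" and sym: "transpose A = A"
    and U: "open U"
  shows "defines_poisson_on U mu"
  unfolding defines_poisson_on_def
proof (intro allI impI ballI)
  fix f g h x assume fgh: "smooth_on U f \<and> smooth_on U g \<and> smooth_on U h" and x: "x \<in> U"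
  have "pbracket mu f (pbracket mu g h) x + pbracket mu g (pbracket mu h f) x
        + pbracket mu h (pbracket mu f g) x
      = (\<Sum>a\<in>{..<6}. \<Sum>i\<in>{..<6}. \<Sum>j\<in>{..<6}.
           partial a f x * partial i g x * partial j h x * jacobi_tensor {..<6} (PiMat mu x) (dPi mu) a i j)"
    using jacobiator_pbracket[OF mu U x] fgh by blast
  also have "\<dots> = 0"
    by (intro sum.neutral ballI) (simp add: jacobi_tensor_vanishes[OF mu sym])
  finally show "pbracket mu f (pbracket mu g h) x + pbracket mu g (pbracket mu h f) x
        + pbracket mu h (pbracket mu f g) x = 0" .
qed

lemma open_domU: "open domU"
  unfolding domU_def by (rule open_Collect_neq) (auto intro: continuous_intros)

(* Conversely, evaluating the Jacobi identity for M1, M2, M3 at gamma = e_k isolates the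
   k-th component of the antisymmetric part of A. *)
lemma symmetric_if_poisson:
  assumes mu: "mu = (\<lambda>(M::real^3, g::real^3). A *v g + mu0)" and P: "defines_poisson_on domU mu"
  shows "transpose A = A"
proof -
  have vanish: "jacobi_tensor {..<6} (PiMat mu (0, axis k 1)) (dPi mu) 0 1 2 = 0" for k :: 3
  proof -
    have x: "(0, axis k 1) \<in> domU" by (simp add: domU_def axis_eq_0_iff)
    then show ?thesis
      using P smooth_on_coord jacobiator_coords[OF mu open_domU x]
      unfolding defines_poisson_on_def by metis
  qed
  have "A$2$3 = A$3$2" "A$3$1 = A$1$3" "A$1$2 = A$2$1"
    using vanish[of 1] vanish[of 2] vanish[of 3] unfolding jacobi_tensor_012[OF mu]
    by (simp_all add: axis_def)
  then show ?thesis unfolding symmetric_matrix3_iff by simp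
qed

theorem mainTheorem7:
  fixes A :: "real^3^3" and mu0 :: "real^3"
  defines "mu \<equiv> (\<lambda>(M::real^3, g::real^3). A *v g + mu0)"
  shows "(defines_poisson_on domU mu \<longleftrightarrow> transpose A = A)
    \<and> (transpose A = A \<longrightarrow>
         casimir_on domU mu (\<lambda>(M, g). (1/2) * (g \<bullet> (A *v g)) + (M + mu0) \<bullet> g))"
proof -
  have mu: "mu = (\<lambda>(M::real^3, g::real^3). A *v g + mu0)" by (simp add: mu_def)
  show ?thesis
    using poisson_if_symmetric[OF mu _ open_domU] symmetric_if_poisson[OF mu]
      casimir_if_symmetric[OF mu] by blast
qed


end
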